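(* Let $\mathbf P=(P,\leq,{}',0,1)$ be an orthogonal lub-complete poset. Then the following conditions are equivalent: (i) $\mathbf P$ is an orthomodular poset. (ii) $\mathbf P$ satisfies $x\leq y$ if and only if $x\rightarrow_K y=1$ for all $x,y\in P$. (iii) $\mathbf P$ satisfies $x\leq y$ if and only if $x\rightarrow_N y=1$ for all $x,y\in P$.
   Context: $(P,\leq,{}',0,1)$ is a bounded poset with an antitone involution ${}'$; orthogonal means $x\leq y'$ implies $x\vee y$ exists; lub-complete means for every lower bound $x$ of a finite subset $M$ there is a maximal lower bound of $M$ above $x$; orthomodular means orthogonal and $x\leq y$ implies $x\vee(y\wedge x')=y$. For $A\subseteq P$, $L(A)$, $U(A)$ are the lower and upper cones, $\mathrm{Max}\,A$, $\mathrm{Min}\,A$ the sets of maximal and minimal elements; joins/meets with sets are elementwise. Kalmbach implication: $x\rightarrow_K y:=\mathrm{Max}\,L(x',y)\vee \mathrm{Max}\,L(x',y')\vee (x\wedge \mathrm{Min}\,U(x',y))$; non-tolens implication: $x\rightarrow_N y:=y'\rightarrow_K x'$. "$=1$" means equal to $\{1\}$. *)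

theory Defs
  imports Main
begin

text \<open>The bounded poset (P, \<le>, ', 0, 1) is modelled as a type of class bounded_order
  (0 = bot, 1 = top) together with an operation cmp (the map x \<mapsto> x').\<close>

definition antitone_involution :: "('a::order \<Rightarrow> 'a) \<Rightarrow> bool" where
  "antitone_involution cmp \<longleftrightarrow> (\<forall>x y. x \<le> y \<longrightarrow> cmp y \<le> cmp x) \<and> (\<forall>x. cmp (cmp x) = x)"

definition is_join :: "'a::order \<Rightarrow> 'a \<Rightarrow> 'a \<Rightarrow> bool" where
  "is_join x y s \<longleftrightarrow> x \<le> s \<and> y \<le> s \<and> (\<forall>t. x \<le> t \<and> y \<le> t \<longrightarrow> s \<le> t)"

definition is_meet :: "'a::order \<Rightarrow> 'a \<Rightarrow> 'a \<Rightarrow> bool" where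
  "is_meet x y m \<longleftrightarrow> m \<le> x \<and> m \<le> y \<and> (\<forall>t. t \<le> x \<and> t \<le> y \<longrightarrow> t \<le> m)"

definition lcone :: "'a::order set \<Rightarrow> 'a set" where
  "lcone A = {x. \<forall>a\<in>A. x \<le> a}"

definition ucone :: "'a::order set \<Rightarrow> 'a set" where
  "ucone A = {x. \<forall>a\<in>A. a \<le> x}"

definition maxs :: "'a::order set \<Rightarrow> 'a set" where
  "maxs A = {x\<in>A. \<forall>y\<in>A. x \<le> y \<longrightarrow> y = x}"

definition mins :: "'a::order set \<Rightarrow> 'a set" where
  "mins A = {x\<in>A. \<forall>y\<in>A. y \<le> x \<longrightarrow> y = x}"

definition set_join :: "'a::order set \<Rightarrow> 'a set \<Rightarrow> 'a set" where
  "set_join A B = {s. \<exists>a\<in>A. \<exists>b\<in>B. is_join a b s}"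

definition set_meet :: "'a::order set \<Rightarrow> 'a set \<Rightarrow> 'a set" where
  "set_meet A B = {m. \<exists>a\<in>A. \<exists>b\<in>B. is_meet a b m}"

definition orthogonal :: "('a::order \<Rightarrow> 'a) \<Rightarrow> bool" where
  "orthogonal cmp \<longleftrightarrow> (\<forall>x y. x \<le> cmp y \<longrightarrow> (\<exists>s. is_join x y s))"

definition lub_complete :: "'a::order itself \<Rightarrow> bool" where
  "lub_complete _ \<longleftrightarrow>
     (\<forall>M :: 'a set. finite M \<longrightarrow> (\<forall>x\<in>lcone M. \<exists>m\<in>maxs (lcone M). x \<le> m))"

definition orthomodular :: "('a::order \<Rightarrow> 'a) \<Rightarrow> bool" where
  "orthomodular cmp \<longleftrightarrow> orthogonal cmp \<and>
     (\<forall>x y. x \<le> y \<longrightarrow> (\<exists>m. is_meet y (cmp x) m \<and> is_join x m y))"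

definition impK :: "('a::order \<Rightarrow> 'a) \<Rightarrow> 'a \<Rightarrow> 'a \<Rightarrow> 'a set" where
  "impK cmp x y =
     set_join (set_join (maxs (lcone {cmp x, y})) (maxs (lcone {cmp x, cmp y})))
              (set_meet {x} (mins (ucone {cmp x, y})))"

definition impN :: "('a::order \<Rightarrow> 'a) \<Rightarrow> 'a \<Rightarrow> 'a \<Rightarrow> 'a set" where
  "impN cmp x y = impK cmp (cmp y) (cmp x)"

end

theory Submission
  imports Defs
begin

text \<open>Whenever the meets \<open>a = x' \<and> y\<close>, \<open>b = x' \<and> y'\<close>, the join \<open>d = x' \<or> y\<close> and the
  remaining joins and meets exist, every set Max L and Min U in \<open>x \<rightarrow>\<^sub>K y\<close> is a singleton
  and \<open>x \<rightarrow>\<^sub>K y = {(a \<or> b) \<or> (x \<and> d)}\<close>.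
  If \<open>P\<close> is orthomodular and \<open>x \<le> y\<close>, then \<open>a \<or> y' = x'\<close> and \<open>d = 1\<close>, so \<open>x \<rightarrow>\<^sub>K y = {x' \<or> x} = {1}\<close>.
  Conversely, orthomodularity in the form ``\<open>c \<le> z\<close> and \<open>c \<or> z' = 1\<close> imply \<open>c = z\<close>''
  turns an element \<open>(a \<or> b) \<or> (x \<and> d) = 1\<close> of \<open>x \<rightarrow>\<^sub>K y\<close> successively into
  \<open>x \<and> d = x\<close>, \<open>a \<or> b = x'\<close>, \<open>d = 1\<close> and \<open>b = y'\<close>, whence \<open>x \<le> y\<close>.
  If (ii) holds, then \<open>{1} = x \<rightarrow>\<^sub>K 1 = {x' \<or> x}\<close> for every \<open>x\<close>, and for \<open>x \<le> y\<close> the element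
  \<open>z = x \<or> (y \<and> x')\<close> satisfies \<open>y \<rightarrow>\<^sub>K z = {y' \<or> y} = {1}\<close>, so \<open>y \<le> z\<close>, that is \<open>z = y\<close>.
  Since \<open>x \<rightarrow>\<^sub>N y = y' \<rightarrow>\<^sub>K x'\<close>, condition (iii) is condition (ii) read through \<open>'\<close>.\<close>

lemma is_join_unique: "is_join a b s \<Longrightarrow> is_join a b t \<Longrightarrow> s = t"
  unfolding is_join_def by (meson order.antisym)

lemma is_meet_unique: "is_meet a b s \<Longrightarrow> is_meet a b t \<Longrightarrow> s = t"
  unfolding is_meet_def by (meson order.antisym)

lemma is_join_commute: "is_join a b s \<Longrightarrow> is_join b a s"
  unfolding is_join_def by blast

lemma is_meet_commute: "is_meet a b s \<Longrightarrow> is_meet b a s"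
  unfolding is_meet_def by blast

lemma is_join_of_le: "x \<le> y \<Longrightarrow> is_join x y y"
  unfolding is_join_def by auto

lemma is_meet_of_le: "x \<le> y \<Longrightarrow> is_meet x y x"
  unfolding is_meet_def by auto

lemma is_join_bot: "is_join x (bot::'a::order_bot) x"
  unfolding is_join_def by auto

lemma is_join_top_mono:
  "is_join a b (top::'a::order_top) \<Longrightarrow> b \<le> b' \<Longrightarrow> is_join a b' top"
  unfolding is_join_def by (meson order_trans top_greatest)

lemma maxs_lcone_pair: "is_meet a b m \<Longrightarrow> maxs (lcone {a, b}) = {m}"
  unfolding is_meet_def maxs_def lcone_def by (auto intro: order.antisym)

lemma mins_ucone_pair: "is_join a b s \<Longrightarrow> mins (ucone {a, b}) = {s}"
  unfolding is_join_def mins_def ucone_def by (auto intro: order.antisym)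

lemma set_join_singletons: "is_join a b s \<Longrightarrow> set_join {a} {b} = {s}"
  unfolding set_join_def using is_join_unique by auto

lemma set_meet_singletons: "is_meet a b m \<Longrightarrow> set_meet {a} {b} = {m}"
  unfolding set_meet_def using is_meet_unique by auto

lemma impK_eq_singleton:
  assumes "is_meet (cmp x) y a" and "is_meet (cmp x) (cmp y) b" and "is_join (cmp x) y d"
    and "is_meet x d c" and "is_join a b s" and "is_join s c t"
  shows "impK cmp x y = {t}"
  unfolding impK_def using assms
  by (simp add: maxs_lcone_pair mins_ucone_pair set_join_singletons set_meet_singletons)

lemma top_mem_mins_ucone:
  "(top::'a::order_top) \<in> mins (ucone {a, b}) \<Longrightarrow> is_join a b top"
  unfolding mins_def ucone_def is_join_def by (auto simp: top_unique)

locale involutive_poset =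
  fixes cmp :: "'a::{order_bot,order_top} \<Rightarrow> 'a"
  assumes antitone_involution: "antitone_involution cmp"
begin

lemma cmp_cmp [simp]: "cmp (cmp x) = x"
  using antitone_involution unfolding antitone_involution_def by blast

lemma cmp_le_cmp_iff [simp]: "cmp y \<le> cmp x \<longleftrightarrow> x \<le> y"
  using antitone_involution unfolding antitone_involution_def by metis

lemma le_cmp_iff: "x \<le> cmp y \<longleftrightarrow> y \<le> cmp x"
  by (metis cmp_le_cmp_iff cmp_cmp)

lemma cmp_le_iff: "cmp x \<le> y \<longleftrightarrow> cmp y \<le> x"
  by (metis cmp_le_cmp_iff cmp_cmp)

lemma cmp_bot [simp]: "cmp bot = top"
  by (metis cmp_cmp le_cmp_iff bot_least top.extremum_uniqueI)

lemma cmp_top [simp]: "cmp top = bot"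
  by (metis cmp_bot cmp_cmp)

lemma cmp_eq_top_iff [simp]: "cmp x = top \<longleftrightarrow> x = bot"
  by (metis cmp_bot cmp_cmp)

lemma is_meet_cmp_iff: "is_meet (cmp a) (cmp b) (cmp s) \<longleftrightarrow> is_join a b s"
  unfolding is_join_def is_meet_def by (metis cmp_cmp cmp_le_cmp_iff)

lemma is_join_cmp_iff: "is_join (cmp a) (cmp b) (cmp m) \<longleftrightarrow> is_meet a b m"
  unfolding is_join_def is_meet_def by (metis cmp_cmp cmp_le_cmp_iff)

lemma orthogonal_is_meet_exists:
  assumes "orthogonal cmp" and "x \<le> y"
  obtains m where "is_meet (cmp x) y m"
proof -
  obtain j where "is_join x (cmp y) j"
    using assms unfolding orthogonal_def by (metis cmp_cmp)
  then have "is_meet (cmp x) y (cmp j)"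
    using is_meet_cmp_iff[of x "cmp y" j] by simp
  then show thesis by (rule that)
qed

lemma orthomodular_is_join_cmp:
  assumes "orthomodular cmp"
  shows "is_join x (cmp x) top"
proof -
  obtain m where "is_meet top (cmp x) m" and "is_join x m top"
    using assms top_greatest[of x] unfolding orthomodular_def by blast
  moreover have "is_meet top (cmp x) (cmp x)"
    by (simp add: is_meet_commute is_meet_of_le)
  ultimately show ?thesis using is_meet_unique by blast
qed

lemma orthomodular_eq_if_join_cmp_top:
  assumes "orthomodular cmp" and "c \<le> z" and "is_join c (cmp z) top"
  shows "c = z"
proof -
  obtain m where meet: "is_meet z (cmp c) m" and join: "is_join c m z"
    using assms(1,2) unfolding orthomodular_def by blast
  have "c \<le> cmp m" and "cmp z \<le> cmp m"
    using meet unfolding is_meet_def by (auto simp: le_cmp_iff)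
  then have "m = bot"
    using assms(3) unfolding is_join_def by (metis cmp_eq_top_iff top_unique)
  then have "is_join c bot z" using join by simp
  then show ?thesis using is_join_bot is_join_unique by metis
qed

lemma orthomodular_impK_eq_top:
  assumes OM: "orthomodular cmp" and "x \<le> y"
  shows "impK cmp x y = {top}"
proof -
  have "cmp y \<le> cmp x" using \<open>x \<le> y\<close> by simp
  then obtain a where a: "is_meet (cmp x) y a" and "is_join (cmp y) a (cmp x)"
    using OM unfolding orthomodular_def by fastforce
  have "is_meet (cmp x) (cmp y) (cmp y)"
    using \<open>cmp y \<le> cmp x\<close> by (simp add: is_meet_commute is_meet_of_le)
  moreover have "is_join (cmp x) y top"
    using is_join_top_mono[OF is_join_commute[OF orthomodular_is_join_cmp[OF OM]] \<open>x \<le> y\<close>] .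
  moreover have "is_meet x top x" by (simp add: is_meet_of_le)
  moreover have "is_join a (cmp y) (cmp x)"
    using \<open>is_join (cmp y) a (cmp x)\<close> by (rule is_join_commute)
  moreover have "is_join (cmp x) x top"
    using orthomodular_is_join_cmp[OF OM] by (rule is_join_commute)
  ultimately show ?thesis by (rule impK_eq_singleton[where cmp = cmp, OF a])
qed

lemma orthomodular_le_if_top_mem_impK:
  assumes OM: "orthomodular cmp" and "top \<in> impK cmp x y"
  shows "x \<le> y"
proof -
  obtain a b s c d
    where a: "a \<in> maxs (lcone {cmp x, y})" and b: "b \<in> maxs (lcone {cmp x, cmp y})"
      and s: "is_join a b s" and d: "d \<in> mins (ucone {cmp x, y})" and c: "is_meet x d c"
      and top: "is_join s c top"
    using assms(2) unfolding impK_def set_join_def set_meet_def by blast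
  have "a \<le> cmp x" "a \<le> y" "b \<le> cmp x" "b \<le> cmp y"
    using a b unfolding maxs_def lcone_def by auto
  then have "s \<le> cmp x" using s unfolding is_join_def by blast
  have "c \<le> x" using c unfolding is_meet_def by blast
  have "c = x"
    using OM \<open>c \<le> x\<close> is_join_top_mono[OF is_join_commute[OF top] \<open>s \<le> cmp x\<close>]
    by (rule orthomodular_eq_if_join_cmp_top)
  have "s = cmp x"
    using OM \<open>s \<le> cmp x\<close> by (rule orthomodular_eq_if_join_cmp_top) (use top \<open>c = x\<close> in simp)
  have "x \<le> d" "cmp x \<le> d"
    using c d \<open>c = x\<close> unfolding is_meet_def mins_def ucone_def by auto
  then have "d = top"
    using orthomodular_is_join_cmp[OF OM, of x] unfolding is_join_def by (simp add: top_unique)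
  then have join_xy: "is_join (cmp x) y top" using d by (simp add: top_mem_mins_ucone)
  have "is_join b y top"
    unfolding is_join_def
  proof (intro conjI allI impI)
    fix u assume "b \<le> u \<and> y \<le> u"
    moreover from this have "a \<le> u" using \<open>a \<le> y\<close> by (meson order_trans)
    ultimately have "cmp x \<le> u" using s \<open>s = cmp x\<close> unfolding is_join_def by blast
    then show "top \<le> u" using join_xy \<open>b \<le> u \<and> y \<le> u\<close> unfolding is_join_def by blast
  qed auto
  then have "b = cmp y"
    using OM \<open>b \<le> cmp y\<close> by (intro orthomodular_eq_if_join_cmp_top) simp_all
  then show "x \<le> y" using \<open>b \<le> cmp x\<close> by (simp add: le_cmp_iff)
qed

lemma impK_top_eq: "is_join (cmp x) x j \<Longrightarrow> impK cmp x top = {j}"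
  by (rule impK_eq_singleton[where a = "cmp x" and b = bot and d = top and c = x and s = "cmp x"])
    (simp_all add: is_meet_of_le is_meet_commute is_join_of_le is_join_bot)

lemma orthomodular_if_impK_characterizes_le:
  assumes OG: "orthogonal cmp"
    and impK_top: "\<And>x y. x \<le> y \<Longrightarrow> impK cmp x y = {top}"
    and le: "\<And>x y. impK cmp x y = {top} \<Longrightarrow> x \<le> y"
  shows "orthomodular cmp"
proof -
  have compl: "is_join (cmp x) x top" for x
  proof -
    obtain j where j: "is_join (cmp x) x j"
      using OG unfolding orthogonal_def by force
    then have "j = top" using impK_top_eq impK_top[of x top] by simp
    with j show ?thesis by simp
  qed
  have disjoint: "is_meet x (cmp x) bot" for x
    using compl[of x] is_join_cmp_iff[of x "cmp x" bot] by (simp add: is_join_commute)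
  show ?thesis unfolding orthomodular_def
  proof (intro conjI allI impI OG)
    fix x y :: 'a assume "x \<le> y"
    obtain m where m: "is_meet y (cmp x) m"
      using orthogonal_is_meet_exists[OF OG \<open>x \<le> y\<close>] is_meet_commute by metis
    then have "m \<le> y" "m \<le> cmp x" unfolding is_meet_def by auto
    then have "x \<le> cmp m" by (simp add: le_cmp_iff)
    then obtain z where z: "is_join x m z"
      using OG unfolding orthogonal_def by blast
    then have "z \<le> y" using \<open>x \<le> y\<close> \<open>m \<le> y\<close> unfolding is_join_def by blast
    have "x \<le> z" "m \<le> z" using z unfolding is_join_def by auto
    have "is_meet (cmp y) z bot"
      unfolding is_meet_def
    proof (intro conjI allI impI)
      fix t assume "t \<le> cmp y \<and> t \<le> z"
      then have "t \<le> cmp z" "t \<le> z" using \<open>z \<le> y\<close> by (auto intro: order_trans)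
      then show "t \<le> bot" using disjoint[of z] unfolding is_meet_def by blast
    qed auto
    moreover have "is_meet (cmp y) (cmp z) (cmp y)"
      using \<open>z \<le> y\<close> by (simp add: is_meet_of_le)
    moreover have "is_join (cmp y) z top"
      unfolding is_join_def
    proof (intro conjI allI impI)
      fix u assume "cmp y \<le> u \<and> z \<le> u"
      then have "cmp u \<le> y" and "cmp u \<le> cmp z"
        by (simp_all add: cmp_le_iff)
      moreover have "cmp z \<le> cmp x" and "cmp z \<le> cmp m"
        using \<open>x \<le> z\<close> \<open>m \<le> z\<close> by simp_all
      ultimately have "cmp u \<le> y" "cmp u \<le> cmp x" "cmp u \<le> cmp m"
        by (auto intro: order_trans)
      then have "cmp u \<le> m" using m unfolding is_meet_def by blast
      then have "cmp u \<le> bot"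
        using disjoint[of m] \<open>cmp u \<le> cmp m\<close> unfolding is_meet_def by blast
      then show "top \<le> u" by (simp add: cmp_le_iff)
    qed auto
    moreover have "is_meet y top y" by (simp add: is_meet_of_le)
    moreover have "is_join bot (cmp y) (cmp y)" by (simp add: is_join_of_le)
    ultimately have "impK cmp y z = {top}"
      using compl[of y] by (rule impK_eq_singleton)
    then have "z = y" using le \<open>z \<le> y\<close> by (simp add: order.antisym)
    with m z show "\<exists>m. is_meet y (cmp x) m \<and> is_join x m y" by blast
  qed
qed

lemma impN_characterizes_le_iff_impK:
  "(\<forall>x y. x \<le> y \<longleftrightarrow> impN cmp x y = {top}) \<longleftrightarrow> (\<forall>x y. x \<le> y \<longleftrightarrow> impK cmp x y = {top})"
  unfolding impN_def by (metis cmp_le_cmp_iff cmp_cmp)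

lemma orthomodular_iff_impK_characterizes_le:
  assumes "orthogonal cmp"
  shows "orthomodular cmp \<longleftrightarrow> (\<forall>x y. x \<le> y \<longleftrightarrow> impK cmp x y = {top})"
  using orthomodular_impK_eq_top orthomodular_le_if_top_mem_impK
    orthomodular_if_impK_characterizes_le[OF assms]
  by (metis singletonI)

end

theorem theorem6:
  fixes cmp :: "'a::{order_bot,order_top} \<Rightarrow> 'a"
  assumes "antitone_involution cmp"
    and "orthogonal cmp"
    and "lub_complete TYPE('a)"
  shows "(orthomodular cmp \<longleftrightarrow> (\<forall>x y. x \<le> y \<longleftrightarrow> impK cmp x y = {top}))
       \<and> (orthomodular cmp \<longleftrightarrow> (\<forall>x y. x \<le> y \<longleftrightarrow> impN cmp x y = {top}))"
proof -
  interpret involutive_poset cmp by (rule involutive_poset.intro) (rule assms(1))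
  show ?thesis
    using orthomodular_iff_impK_characterizes_le[OF assms(2)]
    unfolding impN_characterizes_le_iff_impK by blast
qed

end
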